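(* Let $\mathbb{G}$ be a homogeneous group of homogeneous dimension $Q\geq 3$ and let $|\cdot|$ be any homogeneous quasi-norm on $\mathbb{G}$. Then for every complex-valued $f\in C_0^\infty(\mathbb{G}\setminus\{0\})$ and every $\alpha\in\mathbb{R}$, $$\left\|\frac{1}{|x|^{\alpha}}\mathcal{R} f\right\|^{2}_{L^{2}(\mathbb{G})}-\left(\frac{Q-2}{2}-\alpha\right)^{2}\left\|\frac{f}{|x|^{\alpha+1}}\right\|^{2}_{L^{2}(\mathbb{G})}=\left\|\frac{1}{|x|^{\alpha}}\mathcal{R} f+\frac{Q-2-2\alpha}{2|x|^{\alpha+1}}f\right\|^{2}_{L^{2}(\mathbb{G})}.$$
   Context: A homogeneous group $\mathbb{G}$ is a Lie group whose underlying manifold is $\mathbb{R}^n$, equipped with dilations $D_\lambda(x)=(\lambda^{\nu_1}x_1,\dots,\lambda^{\nu_n}x_n)$, $\nu_1,\dots,\nu_n>0$, such that each $D_\lambda$ ($\lambda>0$) is a group automorphism. Its homogeneous dimension is $Q=\nu_1+\dots+\nu_n$. The Haar measure $dx$ on $\mathbb{G}$ is Lebesgue measure on $\mathbb{R}^n$, and $L^2(\mathbb{G})$ is taken with respect to it. A homogeneous quasi-norm is a continuous function $x\mapsto|x|\in[0,\infty)$ with $|x^{-1}|=|x|$, $|D_\lambda x|=\lambda|x|$ for all $\lambda>0$, and $|x|=0$ iff $x=0$ (here $0$ is the identity). The radial derivative $\mathcal{R}$ is defined for $x\neq 0$ by $\mathcal{R}f(x)=\frac{d}{dr}\big[f(D_r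 y)\big]\big|_{r=|x|}$, where $y=D_{1/|x|}x$ lies on the unit quasi-sphere $\{|y|=1\}$; i.e. $\mathcal{R}=\frac{d}{d|x|}$ is differentiation along the dilation orbits with respect to $r=|x|$. *)

theory Defs
  imports "HOL-Analysis.Analysis"
begin

fun dderiv :: "'a::real_normed_vector list \<Rightarrow> ('a \<Rightarrow> 'b::real_normed_vector) \<Rightarrow> 'a \<Rightarrow> 'b" where
  "dderiv [] f = f"
| "dderiv (v # vs) f = (\<lambda>x. frechet_derivative (dderiv vs f) (at x) v)"

definition smooth_fun :: "('a::real_normed_vector \<Rightarrow> 'b::real_normed_vector) \<Rightarrow> bool" where
  "smooth_fun f \<longleftrightarrow> (\<forall>vs x. dderiv vs f differentiable (at x))"

definition dil :: "('n::finite \<Rightarrow> real) \<Rightarrow> real \<Rightarrow> real^'n \<Rightarrow> real^'n" where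
  "dil \<nu> t x = (\<chi> i. (t powr \<nu> i) * x $ i)"

definition hom_dim :: "('n::finite \<Rightarrow> real) \<Rightarrow> real" where
  "hom_dim \<nu> = (\<Sum>i\<in>UNIV. \<nu> i)"

definition homogeneous_group ::
  "(real^'n \<Rightarrow> real^'n \<Rightarrow> real^'n) \<Rightarrow> (real^'n \<Rightarrow> real^'n) \<Rightarrow> ('n::finite \<Rightarrow> real) \<Rightarrow> bool" where
  "homogeneous_group gmul ginv \<nu> \<longleftrightarrow>
     (\<forall>x y z. gmul (gmul x y) z = gmul x (gmul y z)) \<and>
     (\<forall>x. gmul 0 x = x \<and> gmul x 0 = x) \<and>
     (\<forall>x. gmul (ginv x) x = 0 \<and> gmul x (ginv x) = 0) \<and>
     smooth_fun (\<lambda>p. gmul (fst p) (snd p)) \<and> smooth_fun ginv \<and>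
     (\<forall>i. \<nu> i > 0) \<and>
     (\<forall>t>0. \<forall>x y. dil \<nu> t (gmul x y) = gmul (dil \<nu> t x) (dil \<nu> t y))"

definition hom_quasi_norm ::
  "(real^'n \<Rightarrow> real^'n) \<Rightarrow> ('n::finite \<Rightarrow> real) \<Rightarrow> (real^'n \<Rightarrow> real) \<Rightarrow> bool" where
  "hom_quasi_norm ginv \<nu> N \<longleftrightarrow>
     continuous_on UNIV N \<and> (\<forall>x. N x \<ge> 0) \<and>
     (\<forall>x. N (ginv x) = N x) \<and>
     (\<forall>t>0. \<forall>x. N (dil \<nu> t x) = t * N x) \<and>
     (\<forall>x. N x = 0 \<longleftrightarrow> x = 0)"

definition radial_deriv ::
  "('n::finite \<Rightarrow> real) \<Rightarrow> (real^'n \<Rightarrow> real) \<Rightarrow> (real^'n \<Rightarrow> 'b::real_normed_vector) \<Rightarrow> real^'n \<Rightarrow> 'b" where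
  "radial_deriv \<nu> N f x =
     vector_derivative (\<lambda>r. f (dil \<nu> r (dil \<nu> (1 / N x) x))) (at (N x))"

definition C0_inf_punct :: "(real^'n::finite \<Rightarrow> complex) \<Rightarrow> bool" where
  "C0_inf_punct f \<longleftrightarrow> smooth_fun f \<and> compact (closure {x. f x \<noteq> 0}) \<and>
     0 \<notin> closure {x. f x \<noteq> 0}"

definition L2norm_sq :: "(real^'n::finite \<Rightarrow> complex) \<Rightarrow> real" where
  "L2norm_sq g = (\<integral>x. (cmod (g x))\<^sup>2 \<partial>lborel)"

end

theory Submission
  imports Defs
begin

text \<open>Write \<open>g = N\<^sup>\<gamma> f\<close> and \<open>Dg = N\<^sup>\<gamma> E f\<close> with \<open>\<gamma> = -\<alpha> - 1\<close>, where
  \<open>E = \<Sum>\<^sub>i \<nu>\<^sub>i x\<^sub>i \<partial>\<^sub>i\<close> generates the dilations, so that \<open>N\<^sup>-\<^sup>\<alpha> \<R>f = Dg\<close>. Expanding the square on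
  the right, the identity reduces to \<open>\<integral> Re (Dg \<cdot> conj g) = -(Q/2 + \<gamma>) \<integral> |g|\<^sup>2\<close>.
  This is an integration by parts along the dilation orbits that needs no polar coordinates:
  as \<open>D\<^sub>t\<close> has Jacobian \<open>t\<^sup>Q\<close>, \<open>\<integral> \<phi>(D\<^sub>t x) dx = t\<^sup>-\<^sup>Q \<integral> \<phi>\<close>, and differentiating at \<open>t = 1\<close>
  under the integral sign gives \<open>\<integral> E\<phi> = -Q \<integral> \<phi>\<close>. For \<open>\<phi> = |g|\<^sup>2\<close> the homogeneity of the
  weight gives \<open>E\<phi> = 2 Re (Dg \<cdot> conj g) + 2\<gamma> |g|\<^sup>2\<close>.\<close>

definition dil_generator :: "('n::finite \<Rightarrow> real) \<Rightarrow> real^'n \<Rightarrow> real^'n" where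
  "dil_generator \<nu> x = (\<chi> i. \<nu> i * x $ i)"

lemma dil_dil: "0 \<le> s \<Longrightarrow> 0 \<le> t \<Longrightarrow> dil \<nu> s (dil \<nu> t x) = dil \<nu> (s * t) x"
  by (simp add: dil_def vec_eq_iff powr_mult)

lemma dil_1 [simp]: "dil \<nu> 1 x = x"
  by (simp add: dil_def vec_eq_iff)

lemma dil_zero [simp]: "dil \<nu> t 0 = 0"
  by (simp add: dil_def vec_eq_iff)

lemma continuous_on_dil [continuous_intros]:
  assumes "continuous_on S a" "continuous_on S y" "\<And>p. p \<in> S \<Longrightarrow> a p > 0"
  shows "continuous_on S (\<lambda>p. dil \<nu> (a p) (y p))"
  unfolding dil_def using assms
  by (intro continuous_on_vec_lambda continuous_intros) (auto dest: assms(3))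

lemma has_vector_derivative_dil:
  assumes "t > 0"
  shows "((\<lambda>r. dil \<nu> r y) has_vector_derivative (1 / t) *\<^sub>R dil_generator \<nu> (dil \<nu> t y)) (at t)"
proof -
  have dil_sum: "dil \<nu> r y = (\<Sum>i\<in>UNIV. (r powr \<nu> i * y $ i) *\<^sub>R axis i 1)" for r
    by (simp add: dil_def vec_eq_iff axis_def if_distrib cong: if_cong)
  have "((\<lambda>r. dil \<nu> r y) has_vector_derivative
          (\<Sum>i\<in>UNIV. (\<nu> i * t powr (\<nu> i - 1) * y $ i) *\<^sub>R axis i 1)) (at t)"
    unfolding dil_sum using assms
    by (intro has_vector_derivative_sum) (auto intro!: derivative_eq_intros)
  moreover have "(1 / t) *\<^sub>R dil_generator \<nu> (dil \<nu> t y)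
      = (\<Sum>i\<in>UNIV. (\<nu> i * t powr (\<nu> i - 1) * y $ i) *\<^sub>R axis i 1)"
    using assms by (simp add: dil_generator_def dil_def vec_eq_iff axis_def
        if_distrib powr_diff cong: if_cong)
  ultimately show ?thesis by simp
qed

lemma smooth_fun_has_derivative:
  "smooth_fun f \<Longrightarrow> (f has_derivative frechet_derivative f (at x)) (at x)"
proof -
  assume "smooth_fun f"
  then have "dderiv [] f differentiable (at x)" unfolding smooth_fun_def by blast
  then show ?thesis by (simp add: frechet_derivative_works)
qed

lemma smooth_fun_continuous:
  assumes "smooth_fun f"
  shows "continuous_on UNIV f"
  using has_derivative_continuous[OF smooth_fun_has_derivative[OF assms]]
  by (simp add: continuous_at_imp_continuous_on)

lemma continuous_on_smooth_fun_derivative: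
  fixes f :: "'a::euclidean_space \<Rightarrow> 'b::real_normed_vector"
  assumes f: "smooth_fun f" and p: "continuous_on S p" and q: "continuous_on S q"
  shows "continuous_on S (\<lambda>z. frechet_derivative f (at (p z)) (q z))"
proof -
  have "continuous_on UNIV (\<lambda>x. frechet_derivative f (at x) v)" for v
  proof -
    have "dderiv [v] f differentiable (at x)" for x using f unfolding smooth_fun_def by blast
    then show ?thesis
      by (simp add: differentiable_imp_continuous_within continuous_at_imp_continuous_on)
  qed
  then have "continuous_on S (\<lambda>z. frechet_derivative f (at (p z)) b)" for b
    by (rule continuous_on_compose2[OF _ p]) simp
  then have "continuous_on S (\<lambda>z. \<Sum>b\<in>Basis. (q z \<bullet> b) *\<^sub>R frechet_derivative f (at (p z)) b)"
    by (intro continuous_intros q)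
  moreover have expand: "frechet_derivative f (at x) v
      = (\<Sum>b\<in>Basis. (v \<bullet> b) *\<^sub>R frechet_derivative f (at x) b)" for x v
  proof -
    have l: "linear (frechet_derivative f (at x))"
      using has_derivative_linear[OF smooth_fun_has_derivative[OF f]] .
    have "frechet_derivative f (at x) v = frechet_derivative f (at x) (\<Sum>b\<in>Basis. (v \<bullet> b) *\<^sub>R b)"
      by (simp add: euclidean_representation)
    then show ?thesis by (simp add: linear_sum[OF l] linear_scale[OF l])
  qed
  ultimately show ?thesis by (subst expand)
qed

lemma frechet_derivative_outside_closure_support:
  assumes "x \<notin> closure {y. f y \<noteq> 0}"
  shows "frechet_derivative f (at x) = (\<lambda>_. 0)"
proof -
  have "(f has_derivative (\<lambda>_. 0)) (at x)"
  proof (rule has_derivative_transform_within_open)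
    show "((\<lambda>_. 0) has_derivative (\<lambda>_. 0)) (at x)" by simp
    show "open (- closure {y. f y \<noteq> 0})" by (simp add: open_Compl)
    show "x \<in> - closure {y. f y \<noteq> 0}" using assms by simp
    show "0 = f y" if "y \<in> - closure {y. f y \<noteq> 0}" for y
      using that closure_subset[of "{y. f y \<noteq> 0}"] by auto
  qed
  then show ?thesis by (rule frechet_derivative_at[symmetric])
qed

lemma has_vector_derivative_along_dil:
  assumes "smooth_fun f" "t > 0"
  shows "((\<lambda>r. f (dil \<nu> r y)) has_vector_derivative
          (1 / t) *\<^sub>R frechet_derivative f (at (dil \<nu> t y)) (dil_generator \<nu> (dil \<nu> t y))) (at t)"
proof -
  note Df = smooth_fun_has_derivative[OF assms(1), of "dil \<nu> t y"]
  have "(f has_derivative frechet_derivative f (at (dil \<nu> t y)))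
      (at (dil \<nu> t y) within range (\<lambda>r. dil \<nu> r y))"
    using has_derivative_subset[OF Df] by simp
  from vector_derivative_diff_chain_within[OF has_vector_derivative_dil[OF assms(2)] this]
  show ?thesis using has_derivative_linear[OF Df] by (simp add: linear_scale o_def)
qed

lemma radial_deriv_eq:
  assumes "smooth_fun f" "N x > 0"
  shows "radial_deriv \<nu> N f x = (1 / N x) *\<^sub>R frechet_derivative f (at x) (dil_generator \<nu> x)"
proof -
  have "dil \<nu> (N x) (dil \<nu> (1 / N x) x) = x" using assms(2) by (simp add: dil_dil)
  then show ?thesis
    unfolding radial_deriv_def
    using has_vector_derivative_along_dil[OF assms, of \<nu> "dil \<nu> (1 / N x) x"]
    by (simp add: vector_derivative_at)
qed

lemma has_integral_stretch_cart_UNIV: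
  fixes h :: "real^'n::finite \<Rightarrow> 'b::banach" and m :: "'n \<Rightarrow> real"
  assumes h: "(h has_integral I) UNIV" and supp: "\<And>x. x \<notin> cbox a b \<Longrightarrow> h x = 0"
    and m: "\<And>k. m k \<noteq> 0"
  shows "((\<lambda>x. h (\<chi> k. m k * x $ k)) has_integral I /\<^sub>R \<bar>prod m UNIV\<bar>) UNIV"
proof -
  let ?shrink = "\<lambda>x::real^'n. \<chi> k. x $ k / m k"
  have "(\<lambda>x. if x \<in> cbox a b then h x else 0) = h" using supp by auto
  then have "(h has_integral I) (cbox a b)"
    using h has_integral_restrict_UNIV[of "cbox a b" h I] by simp
  from has_integral_stretch_cart[OF this m]
  have "((\<lambda>x. h (\<chi> k. m k * x $ k)) has_integral I /\<^sub>R \<bar>prod m UNIV\<bar>) (?shrink ` cbox a b)" .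
  then show ?thesis
  proof (rule has_integral_on_superset)
    fix x assume "x \<notin> ?shrink ` cbox a b"
    moreover have "x = ?shrink (\<chi> k. m k * x $ k)" using m by (simp add: vec_eq_iff)
    ultimately show "h (\<chi> k. m k * x $ k) = 0" using supp by blast
  qed simp
qed

lemma has_integral_dil:
  fixes h :: "real^'n::finite \<Rightarrow> 'b::banach"
  assumes "(h has_integral I) UNIV" "\<And>x. x \<notin> cbox a b \<Longrightarrow> h x = 0" "t > 0"
  shows "((\<lambda>x. h (dil \<nu> t x)) has_integral I /\<^sub>R t powr hom_dim \<nu>) UNIV"
proof -
  have "prod (\<lambda>k. t powr \<nu> k) UNIV = t powr hom_dim \<nu>"
    using assms(3) by (simp add: hom_dim_def powr_sum)
  then show ?thesis
    using has_integral_stretch_cart_UNIV[OF assms(1,2), where m = "\<lambda>k. t powr \<nu> k"] assms(3)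
    by (simp add: dil_def)
qed

lemma dil_preimage_subset_cbox:
  fixes K :: "(real^'n::finite) set"
  assumes "compact K" "compact T" "T \<subseteq> {0<..}"
  obtains b where "\<And>t x. t \<in> T \<Longrightarrow> dil \<nu> t x \<in> K \<Longrightarrow> x \<in> cbox (-b) b"
proof -
  let ?S = "(\<lambda>(t, y). dil \<nu> (1 / t) y) ` (T \<times> K)"
  have "continuous_on (T \<times> K) (\<lambda>(t, y). dil \<nu> (1 / t) y)"
    unfolding case_prod_beta using assms(3) by (intro continuous_intros) auto
  then have "compact ?S" using assms(1,2) by (intro compact_continuous_image compact_Times)
  then obtain b where b: "?S \<subseteq> cbox (-b) b"
    using compact_imp_bounded bounded_subset_cbox_symmetric by metis
  have "x \<in> cbox (-b) b" if "t \<in> T" "dil \<nu> t x \<in> K" for t x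
  proof -
    have "x = dil \<nu> (1 / t) (dil \<nu> t x)" using that assms(3) by (auto simp: dil_dil)
    then have "x \<in> ?S" using that by (intro image_eqI[where x = "(t, dil \<nu> t x)"]) auto
    then show ?thesis using b by blast
  qed
  then show ?thesis by (rule that)
qed

lemma has_real_derivative_along_dil:
  assumes deriv: "\<And>x. ((\<lambda>t. \<phi> (dil \<nu> t x)) has_real_derivative \<psi> x) (at 1)" and "t > 0"
  shows "((\<lambda>s. \<phi> (dil \<nu> s x)) has_real_derivative \<psi> (dil \<nu> t x) / t) (at t)"
proof -
  let ?y = "dil \<nu> t x"
  have "((\<lambda>r. \<phi> (dil \<nu> r ?y)) has_real_derivative \<psi> ?y) (at ((\<lambda>s. s / t) t))"
    using deriv[of ?y] \<open>t > 0\<close> by simp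
  moreover have "((\<lambda>s. s / t) has_real_derivative 1 / t) (at t)"
    using \<open>t > 0\<close> by (auto intro!: derivative_eq_intros)
  ultimately have "((\<lambda>s. \<phi> (dil \<nu> (s / t) ?y)) has_real_derivative \<psi> ?y / t) (at t)"
    using DERIV_chain2 by fastforce
  then show ?thesis
  proof (rule has_field_derivative_transform_within_open[where S = "{0<..}"])
    show "\<phi> (dil \<nu> (s / t) (dil \<nu> t x)) = \<phi> (dil \<nu> s x)" if "s \<in> {0<..}" for s
      using that \<open>t > 0\<close> by (simp add: dil_dil)
  qed (use \<open>t > 0\<close> in auto)
qed

lemma continuous_on_cbox_has_integral_UNIV:
  fixes g :: "'a::euclidean_space \<Rightarrow> 'b::banach"
  assumes "continuous_on (cbox a b) g" "\<And>x. x \<notin> cbox a b \<Longrightarrow> g x = 0"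
  shows "(g has_integral integral (cbox a b) g) UNIV"
  using has_integral_on_superset[OF integrable_integral[OF integrable_continuous[OF assms(1)]] assms(2)]
  by simp

lemma has_real_derivative_integral_along_dil:
  fixes \<phi> \<psi> :: "real^'n::finite \<Rightarrow> real"
  assumes \<phi>: "continuous_on UNIV \<phi>" and \<psi>: "continuous_on UNIV \<psi>"
    and deriv: "\<And>x. ((\<lambda>t. \<phi> (dil \<nu> t x)) has_real_derivative \<psi> x) (at 1)"
  shows "((\<lambda>t. integral (cbox a b) (\<lambda>x. \<phi> (dil \<nu> t x))) has_real_derivative
      integral (cbox a b) \<psi>) (at 1)"
proof -
  define U where "U = {1/2<..<2::real}"
  have U_pos: "t \<in> U \<Longrightarrow> t > 0" for t by (simp add: U_def)
  have dil_cont: "continuous_on (U \<times> cbox a b) (\<lambda>p. dil \<nu> (fst p) (snd p))"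
    by (intro continuous_intros) (auto simp: U_def)
  have "((\<lambda>t. integral (cbox a b) (\<lambda>x. \<phi> (dil \<nu> t x))) has_field_derivative
      integral (cbox a b) (\<lambda>x. \<psi> (dil \<nu> 1 x) / 1)) (at 1 within U)"
  proof (rule leibniz_rule_field_derivative)
    fix t x assume "t \<in> U"
    then show "((\<lambda>t. \<phi> (dil \<nu> t x)) has_real_derivative \<psi> (dil \<nu> t x) / t) (at t within U)"
      using has_real_derivative_along_dil[OF deriv U_pos] has_field_derivative_at_within by blast
  next
    fix t assume "t \<in> U"
    then show "(\<lambda>x. \<phi> (dil \<nu> t x)) integrable_on cbox a b"
      using U_pos by (intro integrable_continuous continuous_on_compose2[OF \<phi>] continuous_intros) auto
  next
    show "continuous_on (U \<times> cbox a b) (\<lambda>(t, x). \<psi> (dil \<nu> t x) / t)"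
      unfolding case_prod_beta using U_pos
      by (intro continuous_on_divide continuous_on_compose2[OF \<psi> dil_cont] continuous_intros) auto
  qed (auto simp: U_def)
  moreover have "at 1 within U = at 1" by (rule at_within_open) (auto simp: U_def)
  ultimately show ?thesis by simp
qed

lemma integral_derivative_along_dil:
  fixes \<phi> \<psi> :: "real^'n::finite \<Rightarrow> real"
  assumes \<phi>: "continuous_on UNIV \<phi>" and \<psi>: "continuous_on UNIV \<psi>" and K: "compact K"
    and supp: "\<And>x. x \<notin> K \<Longrightarrow> \<phi> x = 0" "\<And>x. x \<notin> K \<Longrightarrow> \<psi> x = 0"
    and deriv: "\<And>x. ((\<lambda>t. \<phi> (dil \<nu> t x)) has_real_derivative \<psi> x) (at 1)"
  shows "integral UNIV \<psi> = - hom_dim \<nu> * integral UNIV \<phi>"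
proof -
  \<comment> \<open>The Leibniz rule lives on a box, so take one that supports \<open>\<phi> \<circ> D\<^sub>t\<close> for all \<open>t\<close> near 1.\<close>
  define U where "U = {1/2<..<2::real}"
  have "{1/2..2::real} \<subseteq> {0<..}" by auto
  then obtain b where b: "\<And>t x. t \<in> {1/2..2} \<Longrightarrow> dil \<nu> t x \<in> K \<Longrightarrow> x \<in> cbox (-b) b"
    using dil_preimage_subset_cbox[OF K compact_Icc, where \<nu> = \<nu>] by blast
  have U_pos: "t \<in> U \<Longrightarrow> t > 0" for t by (simp add: U_def)
  have vanish: "\<phi> (dil \<nu> t x) = 0" if "t \<in> U" "x \<notin> cbox (-b) b" for t x
    using b[of t x] supp that by (auto simp: U_def)
  have "1 \<in> U" by (simp add: U_def)
  then have vanish1: "\<phi> x = 0" "\<psi> x = 0" if "x \<notin> cbox (-b) b" for x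
    using vanish[of 1 x] b[of 1 x] supp(2)[of x] that by auto
  have I\<phi>: "(\<phi> has_integral integral (cbox (-b) b) \<phi>) UNIV"
    by (rule continuous_on_cbox_has_integral_UNIV[OF continuous_on_subset[OF \<phi>] vanish1(1)]) auto
  have I\<psi>: "(\<psi> has_integral integral (cbox (-b) b) \<psi>) UNIV"
    by (rule continuous_on_cbox_has_integral_UNIV[OF continuous_on_subset[OF \<psi>] vanish1(2)]) auto
  have scaled: "integral (cbox (-b) b) (\<lambda>x. \<phi> (dil \<nu> t x))
      = integral (cbox (-b) b) \<phi> * t powr (- hom_dim \<nu>)" if "t \<in> U" for t
  proof -
    have "continuous_on (cbox (-b) b) (\<lambda>x. \<phi> (dil \<nu> t x))"
      using U_pos[OF that] by (intro continuous_on_compose2[OF \<phi>] continuous_intros) auto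
    note on_cbox = continuous_on_cbox_has_integral_UNIV[OF this vanish[OF that]]
    have "((\<lambda>x. \<phi> (dil \<nu> t x)) has_integral integral (cbox (-b) b) \<phi> /\<^sub>R t powr hom_dim \<nu>) UNIV"
      by (rule has_integral_dil[OF I\<phi> _ U_pos[OF that]]) (rule vanish1(1))
    then show ?thesis
      using has_integral_unique[OF on_cbox] by (simp add: powr_minus divide_inverse_commute)
  qed
  have "((\<lambda>t. integral (cbox (-b) b) \<phi> * t powr (- hom_dim \<nu>)) has_real_derivative
      integral (cbox (-b) b) \<psi>) (at 1)"
    using has_real_derivative_integral_along_dil[OF \<phi> \<psi> deriv]
  proof (rule has_field_derivative_transform_within_open)
    show "open U" "1 \<in> U" by (simp_all add: U_def)
  qed (rule scaled)
  moreover have "((\<lambda>t. integral (cbox (-b) b) \<phi> * t powr (- hom_dim \<nu>)) has_real_derivative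
      - hom_dim \<nu> * integral (cbox (-b) b) \<phi>) (at 1)"
    using DERIV_cmult[OF has_real_derivative_powr[of 1 "- hom_dim \<nu>"], of "integral (cbox (-b) b) \<phi>"]
    by (simp add: mult.commute)
  ultimately have "integral (cbox (-b) b) \<psi> = - hom_dim \<nu> * integral (cbox (-b) b) \<phi>"
    by (rule DERIV_unique)
  then show ?thesis
    using integral_unique[OF I\<phi>] integral_unique[OF I\<psi>] by simp
qed

lemma hom_quasi_norm_pos:
  assumes "hom_quasi_norm ginv \<nu> N" "x \<noteq> 0"
  shows "N x > 0"
  using assms unfolding hom_quasi_norm_def by (metis less_eq_real_def)

lemma continuous_on_quasi_norm_powr_scaleR:
  fixes g :: "real^'n::finite \<Rightarrow> 'b::real_normed_vector"
  assumes N: "hom_quasi_norm ginv \<nu> N" and g: "continuous_on UNIV g"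
    and K: "compact K" "0 \<notin> K" and supp: "\<And>x. x \<notin> K \<Longrightarrow> g x = 0"
  shows "continuous_on UNIV (\<lambda>x. N x powr \<gamma> *\<^sub>R g x)"
proof -
  have "continuous_on UNIV N" using N unfolding hom_quasi_norm_def by blast
  moreover have "N x \<noteq> 0" if "x \<in> - {0}" for x
    using hom_quasi_norm_pos[OF N, of x] that by simp
  ultimately have "continuous_on (- {0}) (\<lambda>x. N x powr \<gamma> *\<^sub>R g x)"
    by (intro continuous_intros continuous_on_subset[OF g]) (auto intro: continuous_on_subset)
  moreover have "continuous_on (- K) (\<lambda>x. N x powr \<gamma> *\<^sub>R g x)"
    by (rule continuous_on_eq[OF continuous_on_const]) (simp add: supp)
  ultimately have "continuous_on (- {0} \<union> - K) (\<lambda>x. N x powr \<gamma> *\<^sub>R g x)"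
    using compact_imp_closed[OF K(1)] by (intro continuous_on_open_Un) auto
  moreover have "- {0} \<union> - K = UNIV" using K(2) by auto
  ultimately show ?thesis by simp
qed

lemma has_real_derivative_norm_squared:
  assumes "(q has_vector_derivative q') (at t)"
  shows "((\<lambda>s. (norm (q s))\<^sup>2) has_real_derivative 2 * inner (q t) q') (at t)"
proof -
  have "(q has_derivative (\<lambda>h. h *\<^sub>R q')) (at t)"
    using assms by (simp add: has_vector_derivative_def)
  from has_derivative_inner[OF this this]
  have "((\<lambda>s. inner (q s) (q s)) has_derivative
      (\<lambda>h. inner (q t) (h *\<^sub>R q') + inner (h *\<^sub>R q') (q t))) (at t)" .
  then show ?thesis
    unfolding power2_norm_eq_inner has_field_derivative_def
    by (rule has_derivative_eq_rhs) (simp add: inner_commute algebra_simps fun_eq_iff)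
qed

lemma has_real_derivative_weighted_norm_squared_along_dil:
  fixes f :: "real^'n::finite \<Rightarrow> 'b::real_inner"
  assumes N: "hom_quasi_norm ginv \<nu> N" and f: "smooth_fun f"
  defines "V \<equiv> \<lambda>x. frechet_derivative f (at x) (dil_generator \<nu> x)"
  shows "((\<lambda>t. (norm (N (dil \<nu> t x) powr \<gamma> *\<^sub>R f (dil \<nu> t x)))\<^sup>2) has_real_derivative
      2 * inner (N x powr \<gamma> *\<^sub>R V x) (N x powr \<gamma> *\<^sub>R f x)
      + 2 * \<gamma> * (norm (N x powr \<gamma> *\<^sub>R f x))\<^sup>2) (at 1)"
proof (cases "x = 0")
  case True
  moreover have "N 0 = 0" using N unfolding hom_quasi_norm_def by blast
  ultimately show ?thesis by simp
next
  case False
  let ?w = "(N x powr \<gamma>)\<^sup>2"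
  have hom: "N (dil \<nu> t x) = t * N x" if "t > 0" for t
    using N that unfolding hom_quasi_norm_def by blast
  have d1: "((\<lambda>t. (t powr \<gamma>)\<^sup>2) has_real_derivative 2 * \<gamma>) (at 1)"
    by (auto intro!: derivative_eq_intros)
  have "((\<lambda>t. (norm (f (dil \<nu> t x)))\<^sup>2) has_real_derivative 2 * inner (f x) (V x)) (at 1)"
    using has_real_derivative_norm_squared[OF has_vector_derivative_along_dil[OF f, of 1]]
    by (simp add: V_def)
  from DERIV_cmult[OF DERIV_mult[OF d1 this], of ?w]
  have "((\<lambda>t. ?w * ((t powr \<gamma>)\<^sup>2 * (norm (f (dil \<nu> t x)))\<^sup>2)) has_real_derivative
      ?w * (2 * \<gamma> * (norm (f x))\<^sup>2 + 2 * inner (f x) (V x))) (at 1)"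
    by simp
  moreover have "?w * (2 * \<gamma> * (norm (f x))\<^sup>2 + 2 * inner (f x) (V x))
      = 2 * inner (N x powr \<gamma> *\<^sub>R V x) (N x powr \<gamma> *\<^sub>R f x)
        + 2 * \<gamma> * (norm (N x powr \<gamma> *\<^sub>R f x))\<^sup>2"
    by (simp add: power_mult_distrib inner_commute algebra_simps power2_eq_square)
  ultimately have "((\<lambda>t. ?w * ((t powr \<gamma>)\<^sup>2 * (norm (f (dil \<nu> t x)))\<^sup>2)) has_real_derivative
      2 * inner (N x powr \<gamma> *\<^sub>R V x) (N x powr \<gamma> *\<^sub>R f x)
        + 2 * \<gamma> * (norm (N x powr \<gamma> *\<^sub>R f x))\<^sup>2) (at 1)"
    by simp
  then show ?thesis
  proof (rule has_field_derivative_transform_within_open[where S = "{0<..}"])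
    show "?w * ((t powr \<gamma>)\<^sup>2 * (norm (f (dil \<nu> t x)))\<^sup>2)
        = (norm (N (dil \<nu> t x) powr \<gamma> *\<^sub>R f (dil \<nu> t x)))\<^sup>2" if "t \<in> {0<..}" for t
      using that by (simp add: hom powr_mult power_mult_distrib)
  qed simp_all
qed

lemma continuous_compact_support_integrable:
  fixes h :: "'a::euclidean_space \<Rightarrow> 'b::{banach, second_countable_topology}"
  assumes "continuous_on UNIV h" "compact K" "\<And>x. x \<notin> K \<Longrightarrow> h x = 0"
  shows "integrable lborel h"
proof -
  have "integrable lborel (\<lambda>x. indicator K x *\<^sub>R h x)"
    using borel_integrable_compact[OF assms(2) continuous_on_subset[OF assms(1)]] by simp
  moreover have "(\<lambda>x. indicator K x *\<^sub>R h x) = h"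
    using assms(3) by (auto simp: fun_eq_iff indicator_def)
  ultimately show ?thesis by simp
qed

lemma L2norm_sq_add_scaleR:
  fixes u v :: "real^'n::finite \<Rightarrow> complex"
  assumes "continuous_on UNIV u" "continuous_on UNIV v" "compact K"
    and "\<And>x. x \<notin> K \<Longrightarrow> u x = 0" "\<And>x. x \<notin> K \<Longrightarrow> v x = 0"
  shows "L2norm_sq (\<lambda>x. u x + c *\<^sub>R v x)
    = L2norm_sq u + c\<^sup>2 * L2norm_sq v + 2 * c * (\<integral>x. inner (u x) (v x) \<partial>lborel)"
proof -
  have "integrable lborel (\<lambda>x. (cmod (u x))\<^sup>2)" "integrable lborel (\<lambda>x. (cmod (v x))\<^sup>2)"
    "integrable lborel (\<lambda>x. inner (u x) (v x))"
    using assms by (auto intro!: continuous_compact_support_integrable[OF _ assms(3)] continuous_intros)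
  moreover have "(cmod (u x + c *\<^sub>R v x))\<^sup>2
      = (cmod (u x))\<^sup>2 + c\<^sup>2 * (cmod (v x))\<^sup>2 + 2 * c * inner (u x) (v x)" for x
    unfolding power2_norm_eq_inner
    by (simp add: inner_add_left inner_add_right inner_commute[of "v x" "u x"] power2_eq_square
        algebra_simps)
  ultimately show ?thesis by (simp add: L2norm_sq_def)
qed

lemma C0_inf_punct_weighted_continuous:
  fixes f :: "real^'n::finite \<Rightarrow> complex"
  assumes N: "hom_quasi_norm ginv \<nu> N" and f: "C0_inf_punct f"
  shows "continuous_on UNIV (\<lambda>x. N x powr \<gamma> *\<^sub>R f x)"
    and "continuous_on UNIV (\<lambda>x. N x powr \<gamma> *\<^sub>R frechet_derivative f (at x) (dil_generator \<nu> x))"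
proof -
  let ?K = "closure {x. f x \<noteq> 0}"
  have sm: "smooth_fun f" and K: "compact ?K" "0 \<notin> ?K"
    using f unfolding C0_inf_punct_def by auto
  show "continuous_on UNIV (\<lambda>x. N x powr \<gamma> *\<^sub>R f x)"
    using closure_subset[of "{x. f x \<noteq> 0}"]
    by (intro continuous_on_quasi_norm_powr_scaleR[OF N smooth_fun_continuous[OF sm] K]) auto
  have "continuous_on UNIV (\<lambda>x. frechet_derivative f (at x) (dil_generator \<nu> x))"
    unfolding dil_generator_def
    by (intro continuous_on_smooth_fun_derivative[OF sm] continuous_intros continuous_on_vec_lambda)
  then show "continuous_on UNIV (\<lambda>x. N x powr \<gamma> *\<^sub>R frechet_derivative f (at x) (dil_generator \<nu> x))"
    using frechet_derivative_outside_closure_support[of _ f]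
    by (intro continuous_on_quasi_norm_powr_scaleR[OF N _ K]) simp_all
qed

lemma integral_inner_weighted_dil_generator:
  fixes f :: "real^'n::finite \<Rightarrow> complex" and \<gamma> :: real
  assumes N: "hom_quasi_norm ginv \<nu> N" and f: "C0_inf_punct f"
  defines "g \<equiv> \<lambda>x. N x powr \<gamma> *\<^sub>R f x"
    and "Dg \<equiv> \<lambda>x. N x powr \<gamma> *\<^sub>R frechet_derivative f (at x) (dil_generator \<nu> x)"
  shows "(\<integral>x. inner (Dg x) (g x) \<partial>lborel) = - (hom_dim \<nu> / 2 + \<gamma>) * L2norm_sq g"
proof -
  define K where "K = closure {x. f x \<noteq> 0}"
  have sm: "smooth_fun f" and K: "compact K"
    using f unfolding C0_inf_punct_def K_def by auto
  note g_cont = C0_inf_punct_weighted_continuous(1)[OF N f, of \<gamma>, folded g_def]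
  note Dg_cont = C0_inf_punct_weighted_continuous(2)[OF N f, of \<gamma>, folded Dg_def]
  have g_out: "g x = 0" "Dg x = 0" if "x \<notin> K" for x
    using that closure_subset[of "{x. f x \<noteq> 0}"] frechet_derivative_outside_closure_support[of x f]
    by (auto simp: g_def Dg_def K_def)
  have int_sq: "integrable lborel (\<lambda>x. (norm (g x))\<^sup>2)"
    using g_out by (intro continuous_compact_support_integrable[OF _ K] continuous_intros g_cont) auto
  have int_inner: "integrable lborel (\<lambda>x. inner (Dg x) (g x))"
    using g_out
    by (intro continuous_compact_support_integrable[OF _ K] continuous_intros g_cont Dg_cont) auto
  have "integral UNIV (\<lambda>x. 2 * inner (Dg x) (g x) + 2 * \<gamma> * (norm (g x))\<^sup>2)
      = - hom_dim \<nu> * integral UNIV (\<lambda>x. (norm (g x))\<^sup>2)"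
  proof (rule integral_derivative_along_dil[OF _ _ K])
    fix x
    show "((\<lambda>t. (norm (g (dil \<nu> t x)))\<^sup>2) has_real_derivative
        2 * inner (Dg x) (g x) + 2 * \<gamma> * (norm (g x))\<^sup>2) (at 1)"
      unfolding g_def Dg_def by (rule has_real_derivative_weighted_norm_squared_along_dil[OF N sm])
  qed (use g_out in \<open>auto intro!: continuous_intros g_cont Dg_cont\<close>)
  moreover have "integral UNIV (\<lambda>x. 2 * inner (Dg x) (g x) + 2 * \<gamma> * (norm (g x))\<^sup>2)
      = 2 * integral UNIV (\<lambda>x. inner (Dg x) (g x)) + 2 * \<gamma> * integral UNIV (\<lambda>x. (norm (g x))\<^sup>2)"
    using integral_add[OF integrable_on_cmult_left[OF integrable_on_lborel[OF int_inner], of 2]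
        integrable_on_cmult_left[OF integrable_on_lborel[OF int_sq], of "2 * \<gamma>"]]
    by simp
  ultimately show ?thesis
    unfolding L2norm_sq_def integral_lborel[OF int_sq, symmetric] integral_lborel[OF int_inner, symmetric]
    by (simp add: algebra_simps)
qed

lemma L2norm_sq_weighted_hardy_identity:
  fixes f :: "real^'n::finite \<Rightarrow> complex" and \<gamma> :: real
  assumes N: "hom_quasi_norm ginv \<nu> N" and f: "C0_inf_punct f"
  defines "g \<equiv> \<lambda>x. N x powr \<gamma> *\<^sub>R f x"
    and "Dg \<equiv> \<lambda>x. N x powr \<gamma> *\<^sub>R frechet_derivative f (at x) (dil_generator \<nu> x)"
    and "c \<equiv> hom_dim \<nu> / 2 + \<gamma>"
  shows "L2norm_sq Dg - c\<^sup>2 * L2norm_sq g = L2norm_sq (\<lambda>x. Dg x + c *\<^sub>R g x)"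
proof -
  have K: "compact (closure {x. f x \<noteq> 0})" using f unfolding C0_inf_punct_def by blast
  have "L2norm_sq (\<lambda>x. Dg x + c *\<^sub>R g x)
      = L2norm_sq Dg + c\<^sup>2 * L2norm_sq g + 2 * c * (\<integral>x. inner (Dg x) (g x) \<partial>lborel)"
    using closure_subset[of "{x. f x \<noteq> 0}"] frechet_derivative_outside_closure_support[of _ f]
    unfolding g_def Dg_def
    by (intro L2norm_sq_add_scaleR[OF C0_inf_punct_weighted_continuous(2,1)[OF N f] K]) auto
  also have "(\<integral>x. inner (Dg x) (g x) \<partial>lborel) = - c * L2norm_sq g"
    unfolding g_def Dg_def c_def by (rule integral_inner_weighted_dil_generator[OF N f])
  also have "L2norm_sq Dg + c\<^sup>2 * L2norm_sq g + 2 * c * (- c * L2norm_sq g)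
      = L2norm_sq Dg - c\<^sup>2 * L2norm_sq g"
    by (simp add: power2_eq_square)
  finally show ?thesis ..
qed

lemma of_real_powr_mult_radial_deriv:
  fixes f :: "real^'n::finite \<Rightarrow> complex"
  assumes N: "hom_quasi_norm ginv \<nu> N" and f: "smooth_fun f"
  shows "of_real (N x powr a) * radial_deriv \<nu> N f x
    = N x powr (a - 1) *\<^sub>R frechet_derivative f (at x) (dil_generator \<nu> x)"
proof (cases "x = 0")
  case True
  moreover have "N 0 = 0" using N unfolding hom_quasi_norm_def by blast
  ultimately show ?thesis by simp
next
  case False
  then have "N x > 0" by (rule hom_quasi_norm_pos[OF N])
  then show ?thesis
    by (simp add: radial_deriv_eq[OF f] powr_diff scaleR_conv_of_real)
qed

theorem theorem2p1:
  fixes gmul :: "real^'n::finite \<Rightarrow> real^'n \<Rightarrow> real^'n"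
    and ginv :: "real^'n \<Rightarrow> real^'n"
    and \<nu> :: "'n \<Rightarrow> real"
    and N :: "real^'n \<Rightarrow> real"
    and f :: "real^'n \<Rightarrow> complex"
    and \<alpha> :: real
  assumes "homogeneous_group gmul ginv \<nu>"
    and "hom_dim \<nu> \<ge> 3"
    and "hom_quasi_norm ginv \<nu> N"
    and "C0_inf_punct f"
  shows "L2norm_sq (\<lambda>x. of_real (N x powr (-\<alpha>)) * radial_deriv \<nu> N f x)
           - ((hom_dim \<nu> - 2) / 2 - \<alpha>)\<^sup>2 * L2norm_sq (\<lambda>x. f x / of_real (N x powr (\<alpha> + 1)))
         = L2norm_sq (\<lambda>x. of_real (N x powr (-\<alpha>)) * radial_deriv \<nu> N f x
              + of_real ((hom_dim \<nu> - 2 - 2 * \<alpha>) / (2 * N x powr (\<alpha> + 1))) * f x)"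
proof -
  let ?c = "(hom_dim \<nu> - 2) / 2 - \<alpha>"
  have sm: "smooth_fun f" using assms(4) unfolding C0_inf_punct_def by blast
  have inv: "N x powr (-\<alpha> - 1) = inverse (N x powr (\<alpha> + 1))" for x
    using powr_minus[of "N x" "\<alpha> + 1"] by (simp add: minus_add_distrib)
  have weight: "f x / of_real (N x powr (\<alpha> + 1)) = N x powr (-\<alpha> - 1) *\<^sub>R f x" for x
    by (simp add: inv scaleR_conv_of_real divide_inverse of_real_inverse mult.commute)
  have "(hom_dim \<nu> - 2 - 2 * \<alpha>) / (2 * N x powr (\<alpha> + 1))
      = (hom_dim \<nu> - 2 - 2 * \<alpha>) / 2 * inverse (N x powr (\<alpha> + 1))" for x
    by (simp add: inverse_eq_divide)
  also have "(hom_dim \<nu> - 2 - 2 * \<alpha>) / 2 * inverse (N x powr (\<alpha> + 1)) = ?c * N x powr (-\<alpha> - 1)"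
    for x by (simp add: inv diff_divide_distrib)
  finally have coeff: "of_real ((hom_dim \<nu> - 2 - 2 * \<alpha>) / (2 * N x powr (\<alpha> + 1))) * f x
      = ?c *\<^sub>R (N x powr (-\<alpha> - 1) *\<^sub>R f x)" for x
    by (simp add: scaleR_conv_of_real)
  have "hom_dim \<nu> / 2 + (-\<alpha> - 1) = ?c" by simp
  from L2norm_sq_weighted_hardy_identity[OF assms(3,4), of "-\<alpha> - 1", unfolded this]
  show ?thesis
    by (simp only: of_real_powr_mult_radial_deriv[OF assms(3) sm] weight coeff)
qed

end
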